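(* Let $c:S^1\to\mathbb{C}$ be a $\mathcal{C}^1$-embedding with image $\Gamma$, and let $F:V\to\mathrm{Tri}$ be the map $F(s_0,s_1,s_2)=[(c(s_0),c(s_1),c(s_2))]$. A point $(s_0,s_1,s_2)\in V$ is a critical point of $F$ (i.e. the tangent map of $F$ at that point is not surjective) if and only if the three tangent lines to $\Gamma$ at $c(s_0),c(s_1),c(s_2)$ are either all parallel or concurrent (all pass through a common point).
   Context: Identify the plane with $\mathbb{C}$. $\mathrm{Tri}$ is the smooth 3-manifold $\big(\mathbb{C}^2\setminus\{(0,0)\}\big)/\mathbb{R}_{>0}$, where a triple $(z_0,z_1,z_2)\in\mathbb{C}^3$ not of the form $(z,z,z)$ is sent to the class $[(z_0,z_1,z_2)]$ of $(z_1-z_0,z_2-z_0)$ under scalar multiplication by positive reals; thus $\mathrm{Tri}$ is the space of triangles modulo translations and positive homotheties. $V=(S^1)^3\setminus\{(s,s,s):s\in S^1\}$. A $\mathcal{C}^1$-embedding is an injective $\mathcal{C}^1$-immersion. The tangent line to $\Gamma$ at $c(s)$ is $c(s)+\mathbb{R}\,\dot c(s)$. *)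

theory Defs
  imports "HOL-Analysis.Analysis"
begin

text \<open>S^1 is modelled as R/Z: a map c : S^1 -> C is a 1-periodic map real => complex.
  A C^1-embedding is a 1-periodic C^1 map with nowhere vanishing derivative
  (immersion) that is injective on R/Z.\<close>

definition C1_embedding_S1 :: "(real \<Rightarrow> complex) \<Rightarrow> bool" where
  "C1_embedding_S1 c \<longleftrightarrow>
     (\<forall>t. c (t + 1) = c t) \<and>
     c C1_differentiable_on UNIV \<and>
     (\<forall>t. vector_derivative c (at t) \<noteq> 0) \<and>
     (\<forall>s t. c s = c t \<longrightarrow> s - t \<in> \<int>)"

text \<open>V = (S^1)^3 minus the diagonal, lifted to R^3.\<close>
definition in_V :: "real \<Rightarrow> real \<Rightarrow> real \<Rightarrow> bool" where
  "in_V s0 s1 s2 \<longleftrightarrow> \<not> (s1 - s0 \<in> \<int> \<and> s2 - s0 \<in> \<int>)"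

text \<open>Tri = (C^2 minus 0)/R_{>0}, realised (with its standard smooth structure) as the
  unit sphere S^3 in C^2 = R^4 via the diffeomorphism [w] |-> w/|w|.\<close>
definition tri_class :: "complex \<Rightarrow> complex \<Rightarrow> complex \<Rightarrow> complex \<times> complex" where
  "tri_class z0 z1 z2 = (let w = (z1 - z0, z2 - z0) in scaleR (1 / norm w) w)"

definition tri_F :: "(real \<Rightarrow> complex) \<Rightarrow> real \<times> real \<times> real \<Rightarrow> complex \<times> complex" where
  "tri_F c = (\<lambda>(s0, s1, s2). tri_class (c s0) (c s1) (c s2))"

text \<open>Tangent space of the sphere model of Tri at a point x: the orthogonal complement of x.
  A point is critical iff the tangent map of F there is not onto that tangent space.\<close>
definition tri_critical :: "(real \<Rightarrow> complex) \<Rightarrow> real \<times> real \<times> real \<Rightarrow> bool" where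
  "tri_critical c p \<longleftrightarrow>
     range (frechet_derivative (tri_F c) (at p)) \<noteq> {v. inner v (tri_F c p) = 0}"

definition tangent_line :: "(real \<Rightarrow> complex) \<Rightarrow> real \<Rightarrow> complex set" where
  "tangent_line c t = {c t + of_real r * vector_derivative c (at t) | r. True}"

definition tangent_lines_parallel :: "(real \<Rightarrow> complex) \<Rightarrow> real \<Rightarrow> real \<Rightarrow> real \<Rightarrow> bool" where
  "tangent_lines_parallel c s0 s1 s2 \<longleftrightarrow>
     (\<exists>d. d \<noteq> 0 \<and> (\<forall>t\<in>{s0, s1, s2}. \<exists>r::real. vector_derivative c (at t) = of_real r * d))"

definition tangent_lines_concurrent :: "(real \<Rightarrow> complex) \<Rightarrow> real \<Rightarrow> real \<Rightarrow> real \<Rightarrow> bool" where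
  "tangent_lines_concurrent c s0 s1 s2 \<longleftrightarrow>
     (\<exists>p. p \<in> tangent_line c s0 \<and> p \<in> tangent_line c s1 \<and> p \<in> tangent_line c s2)"

end

theory Submission imports Defs begin

(* Tri is modelled as the unit sphere of C^2 = R^4, and F factors as
   F = N o G, where G(s0,s1,s2) = (c s1 - c s0, c s2 - c s0) records the two edge
   vectors and N v = v/|v| is the normalisation onto the sphere.  The derivative
   of N at w is onto the tangent space w^perp with kernel R w, and a linear map
   from R^3 into the 3-dimensional tangent space is onto iff it is injective.
   Hence (s0,s1,s2) is critical iff some nonzero velocity (a0,a1,a2) of the
   parameters moves the three points along their tangents d_i = c'(s_i) such
   that the edge vectors change by a multiple l of themselves:
       a1 d1 - a0 d0 = l (z1 - z0),   a2 d2 - a0 d0 = l (z2 - z0).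
   Elementary plane geometry finally identifies this relation with the three
   tangent lines being parallel (case l = 0) or concurrent (case l ~= 0, the
   common point being z_i - (a_i/l) d_i). *)

section \<open>Linear algebra: onto a subspace of the same dimension\<close>

text \<open>This turns the non-surjectivity of the tangent
  map into the existence of a nonzero kernel vector.\<close>

lemma linear_onto_subspace_iff_inj:
  fixes D :: "'a::euclidean_space \<Rightarrow> 'b::euclidean_space"
  assumes lin: "linear D" and S: "subspace S" and sub: "range D \<subseteq> S"
    and dimS: "dim S = DIM('a)"
  shows "range D = S \<longleftrightarrow> inj D"
proof
  assume onto: "range D = S"
  show "inj D"
    unfolding linear_injective_0[OF lin]
  proof (intro allI impI, rule ccontr)
    fix h0 assume h0: "D h0 = 0" "h0 \<noteq> 0"
    let ?K = "{x. inner h0 x = 0}"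
    have "range D \<subseteq> D ` ?K"
    proof
      fix y assume "y \<in> range D"
      then obtain x where x: "y = D x" by auto
      let ?xK = "x - (inner h0 x / inner h0 h0) *\<^sub>R h0"
      have "?xK \<in> ?K" using h0(2) by (simp add: inner_diff_right)
      moreover have "D ?xK = D x"
        using h0(1) by (simp add: linear_diff[OF lin] linear_scale[OF lin])
      ultimately show "y \<in> D ` ?K" using x by (metis image_eqI)
    qed
    then have "dim (range D) \<le> dim ?K"
      using dim_image_le[OF lin, of ?K] by (metis dual_order.antisym image_mono subset_UNIV)
    also have "\<dots> < DIM('a)"
      using dim_hyperplane[OF h0(2)] by simp
    finally show False using onto dimS by simp
  qed
next
  assume "inj D"
  then have "dim (range D) = DIM('a)"
    using dim_image_eq[OF lin, of UNIV] by simp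
  then show "range D = S"
    using subspace_dim_equal[OF linear_subspace_image[OF lin subspace_UNIV] S sub] dimS by simp
qed

section \<open>The derivative of the normalisation map\<close>

definition normalize_deriv :: "'a::real_inner \<Rightarrow> 'a \<Rightarrow> 'a" where
  "normalize_deriv w k = (1 / norm w) *\<^sub>R k - (inner w k / norm w ^ 3) *\<^sub>R w"

lemma has_derivative_normalize:
  fixes w :: "'a::real_inner"
  assumes "w \<noteq> 0"
  shows "((\<lambda>v. (1 / norm v) *\<^sub>R v) has_derivative normalize_deriv w) (at w)"
proof -
  have norm': "(norm has_derivative (\<lambda>k. inner (sgn w) k)) (at w)"
    using has_derivative_norm[OF assms] by (simp add: inner_commute)
  have inv': "((\<lambda>v. inverse (norm v)) has_derivative
        (\<lambda>k. - (inverse (norm w) * inner (sgn w) k * inverse (norm w)))) (at w)"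
    using Deriv.has_derivative_inverse[OF _ norm'] assms by simp
  have "((\<lambda>v. inverse (norm v) *\<^sub>R v) has_derivative
        (\<lambda>k. inverse (norm w) *\<^sub>R k
              + (- (inverse (norm w) * inner (sgn w) k * inverse (norm w))) *\<^sub>R w)) (at w)"
    using has_derivative_scaleR[OF inv' has_derivative_ident] by simp
  moreover have "(\<lambda>k. inverse (norm w) *\<^sub>R k
              + (- (inverse (norm w) * inner (sgn w) k * inverse (norm w))) *\<^sub>R w)
     = normalize_deriv w"
    by (auto simp: normalize_deriv_def sgn_div_norm field_simps power3_eq_cube)
  ultimately show ?thesis by (simp add: divide_inverse)
qed

lemma normalize_deriv_orthogonal: "inner (normalize_deriv w k) w = 0"
proof (cases "w = 0")
  case False
  have "inner (normalize_deriv w k) w = inner k w / norm w - inner w k / norm w ^ 3 * norm w ^ 2"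
    by (simp add: normalize_deriv_def inner_diff_left power2_norm_eq_inner)
  also have "\<dots> = 0"
    using False by (simp add: inner_commute power3_eq_cube power2_eq_square field_simps)
  finally show ?thesis .
qed (simp add: normalize_deriv_def)

lemma linear_normalize_deriv: "linear (normalize_deriv w)"
  by (rule linearI)
    (simp_all add: normalize_deriv_def algebra_simps add_divide_distrib)

lemma normalize_deriv_eq_0_iff:
  assumes "w \<noteq> 0"
  shows "normalize_deriv w k = 0 \<longleftrightarrow> (\<exists>l. k = l *\<^sub>R w)"
proof
  assume "normalize_deriv w k = 0"
  then have "norm w *\<^sub>R ((1 / norm w) *\<^sub>R k) = norm w *\<^sub>R ((inner w k / norm w ^ 3) *\<^sub>R w)"
    by (simp add: normalize_deriv_def)
  then have "k = (inner w k / norm w ^ 2) *\<^sub>R w"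
    using assms by (simp add: power3_eq_cube power2_eq_square)
  then show "\<exists>l. k = l *\<^sub>R w" by blast
next
  assume "\<exists>l. k = l *\<^sub>R w"
  then obtain l where "k = l *\<^sub>R w" by blast
  then show "normalize_deriv w k = 0"
    using assms by (simp add: normalize_deriv_def power2_norm_eq_inner[symmetric]
        power3_eq_cube power2_eq_square)
qed

lemma normalized_linear_onto_tangent_iff:
  fixes L :: "'a::euclidean_space \<Rightarrow> 'b::euclidean_space"
  assumes lin: "linear L" and w: "w \<noteq> 0" and dims: "DIM('b) = Suc DIM('a)"
  shows "range (normalize_deriv w \<circ> L) = {v. inner v ((1 / norm w) *\<^sub>R w) = 0}
         \<longleftrightarrow> (\<forall>h. (\<exists>l. L h = l *\<^sub>R w) \<longrightarrow> h = 0)"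
proof -
  let ?D = "normalize_deriv w \<circ> L"
  have tangent: "{v. inner v ((1 / norm w) *\<^sub>R w) = 0} = {v. inner w v = 0}"
    using w by (auto simp: inner_commute)
  have linD: "linear ?D"
    using lin linear_normalize_deriv by (rule linear_compose)
  have "range ?D \<subseteq> {v. inner w v = 0}"
    using normalize_deriv_orthogonal by (auto simp: inner_commute)
  moreover have "dim {v. inner w v = 0} = DIM('a)"
    using dim_hyperplane[OF w] dims by simp
  ultimately have "range ?D = {v. inner w v = 0} \<longleftrightarrow> inj ?D"
    by (intro linear_onto_subspace_iff_inj[OF linD]) (auto simp: subspace_hyperplane)
  also have "\<dots> \<longleftrightarrow> (\<forall>h. (\<exists>l. L h = l *\<^sub>R w) \<longrightarrow> h = 0)"
    unfolding linear_injective_0[OF linD] using normalize_deriv_eq_0_iff[OF w] by simp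
  finally show ?thesis unfolding tangent .
qed

section \<open>The tangent map of the triangle map\<close>

definition edges :: "(real \<Rightarrow> complex) \<Rightarrow> real \<times> real \<times> real \<Rightarrow> complex \<times> complex" where
  "edges c = (\<lambda>(s0, s1, s2). (c s1 - c s0, c s2 - c s0))"

lemma tri_F_eq: "tri_F c = (\<lambda>v. (1 / norm v) *\<^sub>R v) \<circ> edges c"
  by (auto simp: tri_F_def tri_class_def edges_def Let_def)

definition edges_deriv :: "complex \<Rightarrow> complex \<Rightarrow> complex \<Rightarrow> real \<times> real \<times> real \<Rightarrow> complex \<times> complex"
  where "edges_deriv d0 d1 d2 = (\<lambda>(a0, a1, a2). (a1 *\<^sub>R d1 - a0 *\<^sub>R d0, a2 *\<^sub>R d2 - a0 *\<^sub>R d0))"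

lemma edges_has_derivative:
  assumes "\<And>t. (c has_vector_derivative d t) (at t)"
  shows "(edges c has_derivative edges_deriv (d s0) (d s1) (d s2)) (at (s0, s1, s2))"
proof -
  have along: "((\<lambda>x. c (f x)) has_derivative (\<lambda>h. f h *\<^sub>R d (f (s0, s1, s2)))) (at (s0, s1, s2))"
    if "linear f" for f :: "real \<times> real \<times> real \<Rightarrow> real"
    using has_derivative_compose[OF linear_imp_has_derivative[OF that]
        assms[unfolded has_vector_derivative_def]] by (simp add: linear_imp_has_derivative)
  have "linear fst" "linear (fst \<circ> snd)" "linear (snd \<circ> snd)"
    by (auto intro: linear_compose linear_fst linear_snd)
  from this[THEN along] show ?thesis
    unfolding edges_def edges_deriv_def
    by (auto intro!: has_derivative_Pair has_derivative_diff simp: case_prod_unfold)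
qed

text \<open>The relation describing critical points: a nonzero parameter velocity
  \<open>(a0, a1, a2)\<close> moves the vertices \<open>z_i\<close> along the directions \<open>d_i\<close> so that both edge
  vectors are rescaled by the same real rate \<open>l\<close>, i.e. the triangle is moved only by a
  translation and a homothety to first order.\<close>

definition tangent_homothety ::
  "complex \<Rightarrow> complex \<Rightarrow> complex \<Rightarrow> complex \<Rightarrow> complex \<Rightarrow> complex \<Rightarrow> bool" where
  "tangent_homothety z0 z1 z2 d0 d1 d2 \<longleftrightarrow>
     (\<exists>a0 a1 a2 l::real. (a0, a1, a2) \<noteq> 0 \<and>
        of_real a1 * d1 - of_real a0 * d0 = of_real l * (z1 - z0) \<and>
        of_real a2 * d2 - of_real a0 * d0 = of_real l * (z2 - z0))"

text \<open>A point of \<open>V\<close> has non-degenerate edge vectors, by injectivity of \<open>c\<close> on the circle.\<close>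

lemma edges_nonzero:
  assumes "C1_embedding_S1 c" and "in_V s0 s1 s2"
  shows "edges c (s0, s1, s2) \<noteq> 0"
  using assms unfolding C1_embedding_S1_def in_V_def edges_def
  by (auto simp: zero_prod_def)

lemma tri_critical_iff_tangent_homothety:
  assumes emb: "C1_embedding_S1 c" and V: "in_V s0 s1 s2"
  defines "d t \<equiv> vector_derivative c (at t)"
  shows "tri_critical c (s0, s1, s2) \<longleftrightarrow>
         tangent_homothety (c s0) (c s1) (c s2) (d s0) (d s1) (d s2)"
proof -
  let ?p = "(s0, s1, s2)" and ?L = "edges_deriv (d s0) (d s1) (d s2)"
  define w where "w = edges c ?p"
  have w: "w \<noteq> 0" using edges_nonzero[OF emb V] by (simp add: w_def)
  have "(c has_vector_derivative d t) (at t)" for t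
    using emb unfolding C1_embedding_S1_def C1_differentiable_on_eq d_def
    by (metis UNIV_I vector_derivative_works)
  then have "(tri_F c has_derivative normalize_deriv w \<circ> ?L) (at ?p)"
    unfolding tri_F_eq w_def
    by (intro diff_chain_at edges_has_derivative has_derivative_normalize) (use w w_def in auto)
  then have deriv: "frechet_derivative (tri_F c) (at ?p) = normalize_deriv w \<circ> ?L"
    by (rule frechet_derivative_at[symmetric])
  have lin: "linear ?L"
    by (auto intro!: linearI simp: edges_deriv_def algebra_simps case_prod_unfold)
  have "tri_F c ?p = (1 / norm w) *\<^sub>R w"
    by (simp add: tri_F_eq w_def)
  then have onto: "range (normalize_deriv w \<circ> ?L) = {v. inner v (tri_F c ?p) = 0}
      \<longleftrightarrow> (\<forall>h. (\<exists>l. ?L h = l *\<^sub>R w) \<longrightarrow> h = 0)"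
    using normalized_linear_onto_tangent_iff[OF lin w] by simp
  have "\<not> tri_critical c ?p \<longleftrightarrow> (\<forall>h. (\<exists>l. ?L h = l *\<^sub>R w) \<longrightarrow> h = 0)"
    unfolding tri_critical_def deriv onto[symmetric] by simp
  then show ?thesis
    by (auto simp: tangent_homothety_def edges_deriv_def edges_def w_def scaleR_conv_of_real)
qed

section \<open>The geometry of the critical relation\<close>

text \<open>Parallel case (\<open>l = 0\<close>): all three directions are real multiples of \<open>d0\<close>.
  Concurrent case (\<open>l \<noteq> 0\<close>): the point \<open>z_i - (a_i/l) d_i\<close> is the same for all \<open>i\<close>.\<close>

lemma tangent_homothety_imp_parallel_or_concurrent:
  fixes z0 z1 z2 d0 d1 d2 :: complex
  assumes th: "tangent_homothety z0 z1 z2 d0 d1 d2"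
    and nz: "d0 \<noteq> 0" "d1 \<noteq> 0" "d2 \<noteq> 0"
  shows "(\<exists>d. d \<noteq> 0 \<and> (\<exists>r::real. d0 = of_real r * d) \<and> (\<exists>r::real. d1 = of_real r * d)
              \<and> (\<exists>r::real. d2 = of_real r * d))
       \<or> (\<exists>p. (\<exists>r::real. p = z0 + of_real r * d0) \<and> (\<exists>r::real. p = z1 + of_real r * d1)
              \<and> (\<exists>r::real. p = z2 + of_real r * d2))"
proof -
  obtain a0 a1 a2 l :: real where a: "(a0, a1, a2) \<noteq> 0"
    and e1: "of_real a1 * d1 - of_real a0 * d0 = of_real l * (z1 - z0)"
    and e2: "of_real a2 * d2 - of_real a0 * d0 = of_real l * (z2 - z0)"
    using th unfolding tangent_homothety_def by blast
  show ?thesis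
  proof (cases "l = 0")
    case True
    then have e1': "of_real a1 * d1 = of_real a0 * d0" and e2': "of_real a2 * d2 = of_real a0 * d0"
      using e1 e2 by auto
    have "a0 \<noteq> 0"
      using a e1' e2' nz by (auto simp: zero_prod_def)
    then have "a1 \<noteq> 0" "a2 \<noteq> 0" using e1' e2' nz by auto
    then have "d1 = of_real (a0 / a1) * d0" "d2 = of_real (a0 / a2) * d0" "d0 = of_real 1 * d0"
      using e1' e2' by (simp_all add: field_simps)
    then show ?thesis using nz by blast
  next
    case False
    then have "z0 + of_real (- a0 / l) * d0 = z1 + of_real (- a1 / l) * d1"
      "z0 + of_real (- a0 / l) * d0 = z2 + of_real (- a2 / l) * d2"
      using e1 e2 by (simp_all add: field_simps)
    then show ?thesis by blast
  qed
qed

text \<open>Conversely, directions \<open>r_i d\<close> give the velocity \<open>(1/r0, 1/r1, 1/r2)\<close> with \<open>l = 0\<close>,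
  and a common point \<open>p = z_i + r_i d_i\<close> gives the velocity \<open>(-r0, -r1, -r2)\<close> with
  \<open>l = 1\<close>, which is nonzero because the triangle is not a single point.\<close>

lemma parallel_or_concurrent_imp_tangent_homothety:
  fixes z0 z1 z2 d0 d1 d2 :: complex
  assumes w: "(z1 - z0, z2 - z0) \<noteq> 0"
    and nz: "d0 \<noteq> 0" "d1 \<noteq> 0" "d2 \<noteq> 0"
    and pc: "(\<exists>d. d \<noteq> 0 \<and> (\<exists>r::real. d0 = of_real r * d) \<and> (\<exists>r::real. d1 = of_real r * d)
                  \<and> (\<exists>r::real. d2 = of_real r * d))
           \<or> (\<exists>p. (\<exists>r::real. p = z0 + of_real r * d0) \<and> (\<exists>r::real. p = z1 + of_real r * d1)
                  \<and> (\<exists>r::real. p = z2 + of_real r * d2))"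
  shows "tangent_homothety z0 z1 z2 d0 d1 d2"
  using pc
proof (elim disjE exE conjE)
  fix r0 r1 r2 :: real and d :: complex
  assume r: "d0 = of_real r0 * d" "d1 = of_real r1 * d" "d2 = of_real r2 * d"
  then have "r0 \<noteq> 0" "r1 \<noteq> 0" "r2 \<noteq> 0" using nz by auto
  then have "(1 / r0, 1 / r1, 1 / r2) \<noteq> 0"
    and "of_real (1 / r1) * d1 - of_real (1 / r0) * d0 = of_real 0 * (z1 - z0)"
    and "of_real (1 / r2) * d2 - of_real (1 / r0) * d0 = of_real 0 * (z2 - z0)"
    using r by (simp_all add: zero_prod_def)
  then show ?thesis unfolding tangent_homothety_def by blast
next
  fix p :: complex and r0 r1 r2 :: real
  assume r: "p = z0 + of_real r0 * d0" "p = z1 + of_real r1 * d1" "p = z2 + of_real r2 * d2"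
  then have q1: "of_real (- r1) * d1 - of_real (- r0) * d0 = of_real 1 * (z1 - z0)"
    and q2: "of_real (- r2) * d2 - of_real (- r0) * d0 = of_real 1 * (z2 - z0)"
    by (simp_all add: algebra_simps)
  moreover have "(- r0, - r1, - r2) \<noteq> 0"
    using q1 q2 w by (auto simp: zero_prod_def)
  ultimately show ?thesis unfolding tangent_homothety_def by blast
qed

theorem proposition2p1:
  fixes c :: "real \<Rightarrow> complex" and s0 s1 s2 :: real
  assumes "C1_embedding_S1 c"
    and "in_V s0 s1 s2"
  shows "tri_critical c (s0, s1, s2) \<longleftrightarrow>
         tangent_lines_parallel c s0 s1 s2 \<or> tangent_lines_concurrent c s0 s1 s2"
proof -
  define d where "d t = vector_derivative c (at t)" for t
  have nz: "d t \<noteq> 0" for t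
    using assms(1) by (simp add: C1_embedding_S1_def d_def)
  have w: "(c s1 - c s0, c s2 - c s0) \<noteq> 0"
    using edges_nonzero[OF assms] by (simp add: edges_def)
  have parallel: "tangent_lines_parallel c s0 s1 s2 \<longleftrightarrow>
      (\<exists>e. e \<noteq> 0 \<and> (\<exists>r::real. d s0 = of_real r * e) \<and> (\<exists>r::real. d s1 = of_real r * e)
           \<and> (\<exists>r::real. d s2 = of_real r * e))"
    unfolding tangent_lines_parallel_def d_def by auto
  have concurrent: "tangent_lines_concurrent c s0 s1 s2 \<longleftrightarrow>
      (\<exists>p. (\<exists>r::real. p = c s0 + of_real r * d s0) \<and> (\<exists>r::real. p = c s1 + of_real r * d s1)
           \<and> (\<exists>r::real. p = c s2 + of_real r * d s2))"
    unfolding tangent_lines_concurrent_def tangent_line_def d_def by auto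
  have "tri_critical c (s0, s1, s2) \<longleftrightarrow>
        tangent_homothety (c s0) (c s1) (c s2) (d s0) (d s1) (d s2)"
    using tri_critical_iff_tangent_homothety[OF assms] by (simp add: d_def)
  also have "\<dots> \<longleftrightarrow> tangent_lines_parallel c s0 s1 s2 \<or> tangent_lines_concurrent c s0 s1 s2"
    unfolding parallel concurrent
    using tangent_homothety_imp_parallel_or_concurrent[OF _ nz[of s0] nz[of s1] nz[of s2]]
      parallel_or_concurrent_imp_tangent_homothety[OF w nz[of s0] nz[of s1] nz[of s2]]
    by blast
  finally show ?thesis .
qed

end
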